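(* (1) Let $R$ be a uniquely clean ring. Then $R$ is $n$-torsion clean if and only if $U(R)$ has exponent $n$. (2) Let $R$ be a ring such that $R/J(R)$ is boolean and $J(R)$ is nil of bounded index. Then $R$ is $n$-torsion clean, where $n$ is the exponent of $U(R)$. Moreover, $n$ is a power of $2$.
   Context: All rings are associative with identity; $U(R)$ is the unit group and $J(R)$ the Jacobson radical. A ring is uniquely clean if every element has a unique expression as $e+u$ with $e$ idempotent and $u$ a unit. A ring $R$ is $n$-torsion clean if every $r\in R$ can be written $r=e+u$ with $e^2=e$, $u\in U(R)$, $u^n=1$, and $n$ is the smallest natural number with this property. An ideal $I$ is nil of bounded index if there is $k$ with $r^k=0$ for all $r\in I$. *)

theory Defs
  imports Main
begin

definition is_unit :: "'a::ring_1 \<Rightarrow> bool" where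
  "is_unit u \<longleftrightarrow> (\<exists>v. u * v = 1 \<and> v * u = 1)"

definition idem :: "'a::ring_1 \<Rightarrow> bool" where
  "idem e \<longleftrightarrow> e * e = e"

definition uniquely_clean :: "'a::ring_1 itself \<Rightarrow> bool" where
  "uniquely_clean _ \<longleftrightarrow>
     (\<forall>r::'a. \<exists>!p. idem (fst p) \<and> is_unit (snd p) \<and> r = fst p + snd p)"

definition torsion_clean_with :: "'a::ring_1 itself \<Rightarrow> nat \<Rightarrow> bool" where
  "torsion_clean_with _ m \<longleftrightarrow>
     (\<forall>r::'a. \<exists>e u. idem e \<and> is_unit u \<and> u ^ m = 1 \<and> r = e + u)"

definition n_torsion_clean :: "'a::ring_1 itself \<Rightarrow> nat \<Rightarrow> bool" where
  "n_torsion_clean T n \<longleftrightarrow> 0 < n \<and> torsion_clean_with T n \<and>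
     (\<forall>m. 0 < m \<and> m < n \<longrightarrow> \<not> torsion_clean_with T m)"

definition unit_exponent :: "'a::ring_1 itself \<Rightarrow> nat \<Rightarrow> bool" where
  "unit_exponent _ n \<longleftrightarrow> 0 < n \<and> (\<forall>u::'a. is_unit u \<longrightarrow> u ^ n = 1) \<and>
     (\<forall>m. 0 < m \<and> m < n \<longrightarrow> \<not> (\<forall>u::'a. is_unit u \<longrightarrow> u ^ m = 1))"

definition left_ideal :: "'a::ring_1 set \<Rightarrow> bool" where
  "left_ideal I \<longleftrightarrow> 0 \<in> I \<and> (\<forall>x\<in>I. \<forall>y\<in>I. x + y \<in> I) \<and> (\<forall>x\<in>I. - x \<in> I)
     \<and> (\<forall>r x. x \<in> I \<longrightarrow> r * x \<in> I)"

definition maximal_left_ideal :: "'a::ring_1 set \<Rightarrow> bool" where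
  "maximal_left_ideal I \<longleftrightarrow> left_ideal I \<and> I \<noteq> UNIV \<and>
     (\<forall>K. left_ideal K \<and> I \<subseteq> K \<longrightarrow> K = I \<or> K = UNIV)"

definition jacobson :: "'a::ring_1 set" where
  "jacobson = \<Inter> {I. maximal_left_ideal I}"

text \<open>R/J(R) is boolean: every coset x + J(R) is idempotent, i.e. x*x - x \<in> J(R).\<close>
definition boolean_mod_jacobson :: "'a::ring_1 itself \<Rightarrow> bool" where
  "boolean_mod_jacobson _ \<longleftrightarrow> (\<forall>x::'a. x * x - x \<in> jacobson)"

definition nil_bounded_index :: "'a::ring_1 set \<Rightarrow> bool" where
  "nil_bounded_index I \<longleftrightarrow> (\<exists>k. \<forall>r\<in>I. r ^ k = 0)"

end

theory Submission
  imports Defs "HOL-Computational_Algebra.Primes"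
begin

text \<open>If a unit v has a torsion-clean decomposition v = e + w, then in a uniquely clean ring
comparison with v = 0 + v forces e = 0; if R/J(R) is boolean and J(R) is nil, then e lies in J(R)
(both v and w are 1 modulo J(R)) and is a nilpotent idempotent, so again e = 0. Conversely every r
is an idempotent plus a unit: by unique cleanness, resp. by lifting an idempotent e modulo J(R)
from r - 1 with Newton's iteration y \<mapsto> 3y^2 - 2y^3, so that r - e is 1 plus a nilpotent.
Hence in both situations torsion cleanness with u^m = 1 is the same as U(R) satisfying u^m = 1.
For the bound on the exponent write a unit as 1 + j with j \<in> J(R); also 2 \<in> J(R), and
(1 + j)^(2^t) - 1 lies in the (t+1)-st power of the ideal (2, j) of \<nat>[j], which vanishes
once t + 1 reaches twice the nilpotency index k of J(R). So u^(2^(2k)) = 1 and the exponent divides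
a power of 2.\<close>

lemma left_ideal_diff:
  assumes "left_ideal I" "x \<in> I" "y \<in> I"
  shows "x - y \<in> I"
  using assms unfolding left_ideal_def by (metis diff_conv_add_uminus)

lemma left_ideal_jacobson: "left_ideal (jacobson :: 'a::ring_1 set)"
  by (auto simp: left_ideal_def jacobson_def maximal_left_ideal_def)

lemma idem_power_Suc: "idem e \<Longrightarrow> e ^ Suc n = e"
  by (induction n) (simp_all add: idem_def)

lemma idem_nilpotent_eq_zero:
  assumes "idem e" "e ^ k = 0"
  shows "e = 0"
proof -
  have "e = e * e ^ k"
    using idem_power_Suc[OF assms(1), of k] by simp
  then show ?thesis
    using assms(2) by simp
qed

lemma power_mult_commuting:
  fixes x y :: "'a::monoid_mult"
  assumes "x * y = y * x"
  shows "(x * y) ^ n = x ^ n * y ^ n"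
proof (induction n)
  case (Suc n)
  have "(x * y) ^ Suc n = x * (y * x ^ n) * y ^ n"
    using Suc by (simp add: mult.assoc)
  also have "\<dots> = x * (x ^ n * y) * y ^ n"
    by (simp add: power_commuting_commutes[OF assms])
  also have "\<dots> = x ^ Suc n * y ^ Suc n"
    by (simp add: mult.assoc)
  finally show ?case .
qed simp

lemma numeral_commute: "numeral n * x = x * (numeral n :: 'a::ring_1)"
  by (metis mult_of_nat_commute of_nat_numeral)

lemma one_minus_mult_geometric_sum:
  fixes y :: "'a::ring_1"
  shows "(1 - y) * (\<Sum>i<k. y ^ i) = 1 - y ^ k \<and> (\<Sum>i<k. y ^ i) * (1 - y) = 1 - y ^ k"
proof (induction k)
  case 0 then show ?case by simp
next
  case (Suc k)
  have "(1 - y) * (\<Sum>i<Suc k. y ^ i) = (1 - y) * (\<Sum>i<k. y ^ i) + (1 - y) * y ^ k"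
    by (simp add: distrib_left)
  also have "\<dots> = 1 - y ^ k + (y ^ k - y * y ^ k)"
    by (subst Suc.IH[THEN conjunct1]) (simp add: left_diff_distrib)
  also have "\<dots> = 1 - y * y ^ k" by (simp add: algebra_simps)
  also have "\<dots> = 1 - y ^ Suc k" by (simp only: power_Suc)
  finally have left: "(1 - y) * (\<Sum>i<Suc k. y ^ i) = 1 - y ^ Suc k" .
  have "(\<Sum>i<Suc k. y ^ i) * (1 - y) = (\<Sum>i<k. y ^ i) * (1 - y) + y ^ k * (1 - y)"
    by (simp add: distrib_right)
  also have "\<dots> = 1 - y ^ k + (y ^ k - y ^ k * y)"
    by (subst Suc.IH[THEN conjunct2]) (simp add: right_diff_distrib)
  also have "\<dots> = 1 - y ^ k * y" by (simp add: algebra_simps)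
  also have "\<dots> = 1 - y ^ Suc k" by (simp only: power_Suc2)
  finally show ?case using left by simp
qed

lemma is_unit_one_plus_nilpotent:
  fixes j :: "'a::ring_1"
  assumes "j ^ k = 0"
  shows "is_unit (1 + j)"
proof -
  have "(- j) ^ k = 0"
    by (simp only: power_minus[of j k] assms mult_zero_right)
  then have "(1 + j) * (\<Sum>i<k. (- j) ^ i) = 1 \<and> (\<Sum>i<k. (- j) ^ i) * (1 + j) = 1"
    using one_minus_mult_geometric_sum[of "- j" k] by (simp only: diff_minus_eq_add diff_zero)
  then show ?thesis
    unfolding is_unit_def by blast
qed

text \<open>Newton's iteration for x^2 = x: the defect y^2 - y gets squared in each step.\<close>

definition idem_newton :: "'a::ring_1 \<Rightarrow> 'a" where
  "idem_newton y = 3 * (y * y) - 2 * (y * y * y)"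

lemma idem_newton_diff: "y - idem_newton y = (2 * y - 1) * (y * y - y)"
  unfolding idem_newton_def by (simp add: algebra_simps numeral_Bit0 numeral_Bit1 del: one_add_one)

lemma idem_newton_defect:
  "idem_newton y * idem_newton y - idem_newton y = (y * y - y) * (y * y - y) * (4 * (y * y - y) - 3)"
  unfolding idem_newton_def by (simp add: algebra_simps numeral_Bit0 numeral_Bit1 del: one_add_one)

lemma nilpotent_square_mult_commuting:
  fixes b c :: "'a::ring_1"
  assumes "b * c = c * b" "b ^ 2 ^ Suc s = 0"
  shows "(b * b * c) ^ 2 ^ s = 0"
proof -
  have "b * b * c = c * (b * b)"
    using assms(1) by (metis mult.assoc)
  then have "(b * b * c) ^ 2 ^ s = (b * b) ^ 2 ^ s * c ^ 2 ^ s"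
    by (rule power_mult_commuting)
  moreover have "(b * b) ^ 2 ^ s = b ^ 2 ^ Suc s"
    by (simp only: power_Suc power_mult power2_eq_square)
  ultimately show ?thesis
    using assms(2) by simp
qed

lemma idempotent_lift_mod_nil:
  fixes x :: "'a::ring_1"
  assumes I: "left_ideal I" and x: "x * x - x \<in> I" "(x * x - x) ^ k = 0"
  shows "\<exists>e. idem e \<and> x - e \<in> I"
proof -
  define xs where "xs t = (idem_newton ^^ t) x" for t
  define defect where "defect t = xs t * xs t - xs t" for t
  have xs_Suc: "xs (Suc t) = idem_newton (xs t)" for t
    by (simp add: xs_def)
  have defect_Suc: "defect (Suc t) = defect t * defect t * (4 * defect t - 3)" for t
    unfolding defect_def xs_Suc by (rule idem_newton_defect)
  have defect_commute: "defect t * (4 * defect t - 3) = (4 * defect t - 3) * defect t" for t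
    by (simp add: algebra_simps numeral_commute)
  have mem: "defect t \<in> I \<and> x - xs t \<in> I" for t
  proof (induction t)
    case 0
    show ?case using x I by (simp add: xs_def defect_def left_ideal_def)
  next
    case (Suc t)
    have "defect (Suc t) = (defect t * (4 * defect t - 3)) * defect t"
      by (metis defect_Suc defect_commute mult.assoc)
    moreover have "x - xs (Suc t) = (x - xs t) + (2 * xs t - 1) * defect t"
      using idem_newton_diff[of "xs t"] by (simp add: xs_Suc defect_def algebra_simps)
    ultimately show ?case using Suc I unfolding left_ideal_def by metis
  qed
  have nilpotent: "defect t ^ 2 ^ (k - t) = 0" if "t \<le> k" for t
    using that
  proof (induction t)
    case 0
    have "k \<le> 2 ^ k" by (simp add: less_imp_le)
    then have "defect 0 ^ 2 ^ k = defect 0 ^ (2 ^ k - k) * defect 0 ^ k"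
      by (simp flip: power_add)
    then show ?case using x by (simp add: defect_def xs_def)
  next
    case (Suc t)
    then have "defect t ^ 2 ^ Suc (k - Suc t) = 0"
      by (simp add: Suc_diff_Suc)
    then show ?case
      unfolding defect_Suc by (rule nilpotent_square_mult_commuting[OF defect_commute])
  qed
  have "idem (xs k)"
    using nilpotent[of k] by (simp add: idem_def defect_def)
  then show ?thesis using mem by blast
qed

text \<open>Membership in the w-th power of the ideal (2, j) of the semiring \<nat>[j] \<subseteq> R.\<close>

inductive in_pow_ideal_2j :: "'a::ring_1 \<Rightarrow> nat \<Rightarrow> 'a \<Rightarrow> bool" for j :: 'a where
  zero: "in_pow_ideal_2j j w 0"
| monomial: "w \<le> a + b \<Longrightarrow> in_pow_ideal_2j j w (2 ^ a * j ^ b)"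
| add: "in_pow_ideal_2j j w x \<Longrightarrow> in_pow_ideal_2j j w y \<Longrightarrow> in_pow_ideal_2j j w (x + y)"

lemma in_pow_ideal_2j_mono: "in_pow_ideal_2j j w x \<Longrightarrow> v \<le> w \<Longrightarrow> in_pow_ideal_2j j v x"
  by (induction rule: in_pow_ideal_2j.induct) (metis in_pow_ideal_2j.intros le_trans)+

lemma in_pow_ideal_2j_monomial_mult:
  assumes "in_pow_ideal_2j j v y" "w \<le> a + b"
  shows "in_pow_ideal_2j j (w + v) (2 ^ a * j ^ b * y)"
  using assms(1)
proof (induction rule: in_pow_ideal_2j.induct)
  case (monomial v a' b')
  have "j ^ b * 2 ^ a' = 2 ^ a' * j ^ b"
    by (rule power_commuting_commutes[OF numeral_commute, symmetric])
  then have "2 ^ a * j ^ b * (2 ^ a' * j ^ b') = 2 ^ (a + a') * j ^ (b + b')"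
    by (simp only: mult.assoc power_add) (simp only: flip: mult.assoc)
  moreover have "w + v \<le> (a + a') + (b + b')"
    using monomial assms(2) by linarith
  ultimately show ?case
    by (metis in_pow_ideal_2j.monomial)
qed (simp_all add: distrib_left in_pow_ideal_2j.intros)

lemma in_pow_ideal_2j_mult:
  "in_pow_ideal_2j j w x \<Longrightarrow> in_pow_ideal_2j j v y \<Longrightarrow> in_pow_ideal_2j j (w + v) (x * y)"
  by (induction rule: in_pow_ideal_2j.induct)
    (simp_all add: in_pow_ideal_2j_monomial_mult distrib_right in_pow_ideal_2j.intros)

lemma in_pow_ideal_2j_eq_zero:
  assumes "(2::'a::ring_1) ^ k = 0" "(j::'a) ^ k = 0"
  shows "in_pow_ideal_2j j w x \<Longrightarrow> 2 * k \<le> w \<Longrightarrow> x = 0"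
proof (induction rule: in_pow_ideal_2j.induct)
  case (monomial w a b)
  then consider "k \<le> a" | "k \<le> b" by linarith
  then show ?case
    by cases (metis assms le_add_diff_inverse2 power_add mult_zero_left mult_zero_right)+
qed simp_all

lemma power_two_power_one_plus_eq_one:
  fixes j :: "'a::ring_1"
  assumes "2 ^ k = (0::'a)" "j ^ k = 0"
  shows "(1 + j) ^ 2 ^ (2 * k) = 1"
proof -
  have "in_pow_ideal_2j j (Suc t) ((1 + j) ^ 2 ^ t - 1)" for t
  proof (induction t)
    case 0
    show ?case using in_pow_ideal_2j.monomial[of 1 0 1 j] by simp
  next
    case (Suc t)
    define y where "y = (1 + j) ^ 2 ^ t - 1"
    have "(1 + j) ^ 2 ^ Suc t = ((1 + j) ^ 2 ^ t) ^ 2"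
      by (metis power_Suc2 power_mult)
    then have "(1 + j) ^ 2 ^ Suc t = (1 + y) * (1 + y)"
      by (simp add: y_def power2_eq_square)
    then have "(1 + j) ^ 2 ^ Suc t - 1 = y * 2 + y * y"
      by (simp add: algebra_simps mult_2_right)
    moreover have "in_pow_ideal_2j j (Suc t + 1) (y * 2)"
      using in_pow_ideal_2j_mult[OF Suc[folded y_def] in_pow_ideal_2j.monomial[of 1 1 0]] by simp
    moreover have "in_pow_ideal_2j j (Suc t + 1) (y * y)"
      by (rule in_pow_ideal_2j_mono[OF in_pow_ideal_2j_mult[OF Suc[folded y_def] Suc[folded y_def]]]) simp
    ultimately show ?case by (simp add: in_pow_ideal_2j.add)
  qed
  from in_pow_ideal_2j_eq_zero[OF assms this] show ?thesis by simp
qed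

lemma unit_minus_one_mem:
  assumes I: "left_ideal I" and "u * u - u \<in> I" "is_unit u"
  shows "u - 1 \<in> I"
proof -
  obtain v where "v * u = 1"
    using \<open>is_unit u\<close> unfolding is_unit_def by blast
  then have "u - 1 = v * (u * u - u)"
    by (simp add: right_diff_distrib flip: mult.assoc)
  then show ?thesis using assms unfolding left_ideal_def by simp
qed

lemma units_power_two_power_eq_one:
  fixes u :: "'a::ring_1" and I :: "'a set"
  assumes I: "left_ideal I" and boolean: "\<forall>x. x * x - x \<in> I" and nil: "\<forall>r\<in>I. r ^ k = 0"
    and "is_unit u"
  shows "u ^ 2 ^ (2 * k) = 1"
proof -
  have "(2::'a) \<in> I"
    using boolean[rule_format, of 2] by simp
  then have "(2::'a) ^ k = 0"
    using nil by blast
  moreover have "(u - 1) ^ k = 0"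
    using unit_minus_one_mem[OF I] assms nil by blast
  ultimately show ?thesis
    using power_two_power_one_plus_eq_one[of k "u - 1"] by simp
qed

lemma unit_exponent_exists_dvd:
  assumes "0 < N" "\<forall>u::'a::ring_1. is_unit u \<longrightarrow> u ^ N = 1"
  shows "\<exists>n. unit_exponent TYPE('a) n \<and> n dvd N"
proof -
  define P where "P m \<longleftrightarrow> 0 < m \<and> (\<forall>u::'a. is_unit u \<longrightarrow> u ^ m = 1)" for m
  define n where "n = (LEAST m. P m)"
  have "P n" unfolding n_def by (rule LeastI[of P N]) (simp add: P_def assms)
  have minimal: "\<not> P m" if "m < n" for m
    using not_less_Least that unfolding n_def by blast
  have "P (N mod n)" if "N mod n \<noteq> 0"
    unfolding P_def
  proof (intro conjI allI impI)
    fix u :: 'a assume "is_unit u"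
    have "u ^ N = (u ^ n) ^ (N div n) * u ^ (N mod n)"
      by (metis div_mult_mod_eq power_add power_mult mult.commute)
    then show "u ^ (N mod n) = 1"
      using \<open>P n\<close> \<open>is_unit u\<close> assms(2) unfolding P_def by simp
  qed (use that in simp)
  then have "n dvd N"
    using minimal[of "N mod n"] \<open>P n\<close> unfolding P_def by (meson mod_less_divisor mod_0_imp_dvd)
  moreover have "unit_exponent TYPE('a) n"
    using \<open>P n\<close> minimal unfolding P_def unit_exponent_def by blast
  ultimately show ?thesis by blast
qed

lemma n_torsion_clean_iff_unit_exponent:
  fixes T :: "'a::ring_1 itself"
  assumes "\<forall>m. torsion_clean_with T m \<longleftrightarrow> (\<forall>u::'a. is_unit u \<longrightarrow> u ^ m = 1)"
  shows "n_torsion_clean T n \<longleftrightarrow> unit_exponent T n"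
  using assms by (simp add: n_torsion_clean_def unit_exponent_def)

lemma uniquely_clean_torsion_clean_with_iff:
  assumes "uniquely_clean TYPE('a::ring_1)"
  shows "torsion_clean_with TYPE('a) m \<longleftrightarrow> (\<forall>u::'a. is_unit u \<longrightarrow> u ^ m = 1)"
proof
  assume torsion: "torsion_clean_with TYPE('a) m"
  show "\<forall>u::'a. is_unit u \<longrightarrow> u ^ m = 1"
  proof (intro allI impI)
    fix v :: 'a assume "is_unit v"
    obtain e w where ew: "idem e" "is_unit w" "w ^ m = 1" "v = e + w"
      using torsion unfolding torsion_clean_with_def by blast
    have "idem 0" by (simp add: idem_def)
    then have "(e, w) = (0, v)"
      using assms ew \<open>is_unit v\<close> unfolding uniquely_clean_def
      by (metis add_0 fst_conv snd_conv)
    then show "v ^ m = 1" using ew by simp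
  qed
next
  assume "\<forall>u::'a. is_unit u \<longrightarrow> u ^ m = 1"
  then show "torsion_clean_with TYPE('a) m"
    using assms unfolding uniquely_clean_def torsion_clean_with_def by blast
qed

lemma boolean_mod_nil_torsion_clean_with_iff:
  fixes I :: "'a::ring_1 set"
  assumes I: "left_ideal I" and boolean: "\<forall>x. x * x - x \<in> I" and nil: "\<forall>r\<in>I. r ^ k = 0"
  shows "torsion_clean_with TYPE('a) m \<longleftrightarrow> (\<forall>u::'a. is_unit u \<longrightarrow> u ^ m = 1)"
proof
  assume torsion: "torsion_clean_with TYPE('a) m"
  show "\<forall>u::'a. is_unit u \<longrightarrow> u ^ m = 1"
  proof (intro allI impI)
    fix v :: 'a assume "is_unit v"
    obtain e w where ew: "idem e" "is_unit w" "w ^ m = 1" "v = e + w"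
      using torsion unfolding torsion_clean_with_def by blast
    have "e = (v - 1) - (w - 1)" using ew(4) by simp
    then have "e \<in> I"
      using unit_minus_one_mem[OF I] left_ideal_diff[OF I] boolean ew(2) \<open>is_unit v\<close> by metis
    then have "e = 0" using idem_nilpotent_eq_zero ew(1) nil by blast
    then show "v ^ m = 1" using ew by simp
  qed
next
  assume units: "\<forall>u::'a. is_unit u \<longrightarrow> u ^ m = 1"
  show "torsion_clean_with TYPE('a) m"
    unfolding torsion_clean_with_def
  proof
    fix r :: 'a
    obtain e where e: "idem e" "(r - 1) - e \<in> I"
      using idempotent_lift_mod_nil[OF I] boolean nil by blast
    then have "((r - 1) - e) ^ k = 0"
      using nil by blast
    then have "is_unit (1 + ((r - 1) - e))"
      by (rule is_unit_one_plus_nilpotent)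
    moreover have "1 + ((r - 1) - e) = r - e"
      by simp
    ultimately have "is_unit (r - e)" and "r = e + (r - e)"
      by simp_all
    then show "\<exists>e u. idem e \<and> is_unit u \<and> u ^ m = 1 \<and> r = e + u"
      using e(1) units by blast
  qed
qed

theorem corollary1p4:
  shows "(uniquely_clean TYPE('a::ring_1) \<longrightarrow>
            (\<forall>n. n_torsion_clean TYPE('a) n \<longleftrightarrow> unit_exponent TYPE('a) n))
       \<and> (boolean_mod_jacobson TYPE('a) \<and> nil_bounded_index (jacobson :: 'a set) \<longrightarrow>
            (\<exists>n. unit_exponent TYPE('a) n \<and> n_torsion_clean TYPE('a) n \<and> (\<exists>k. n = 2 ^ k)))"
proof (intro conjI impI allI)
  fix n assume "uniquely_clean TYPE('a)"
  then have "\<forall>m. torsion_clean_with TYPE('a) m \<longleftrightarrow> (\<forall>u::'a. is_unit u \<longrightarrow> u ^ m = 1)"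
    using uniquely_clean_torsion_clean_with_iff by blast
  then show "n_torsion_clean TYPE('a) n \<longleftrightarrow> unit_exponent TYPE('a) n"
    by (rule n_torsion_clean_iff_unit_exponent)
next
  assume "boolean_mod_jacobson TYPE('a) \<and> nil_bounded_index (jacobson :: 'a set)"
  then obtain k where boolean: "\<forall>x::'a. x * x - x \<in> jacobson"
    and nil: "\<forall>r \<in> (jacobson :: 'a set). r ^ k = 0"
    unfolding boolean_mod_jacobson_def nil_bounded_index_def by blast
  note jacobson = left_ideal_jacobson[where 'a = 'a]
  have "\<forall>u::'a. is_unit u \<longrightarrow> u ^ 2 ^ (2 * k) = 1"
    using units_power_two_power_eq_one[OF jacobson boolean nil] by blast
  then obtain n where exponent: "unit_exponent TYPE('a) n" and "n dvd 2 ^ (2 * k)"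
    using unit_exponent_exists_dvd[of "2 ^ (2 * k)"] by auto
  then have "\<exists>i. n = 2 ^ i"
    by (auto simp: divides_primepow_nat[OF two_is_prime_nat])
  moreover have "n_torsion_clean TYPE('a) n"
    using exponent boolean_mod_nil_torsion_clean_with_iff[OF jacobson boolean nil]
    by (simp add: n_torsion_clean_iff_unit_exponent)
  ultimately show "\<exists>n. unit_exponent TYPE('a) n \<and> n_torsion_clean TYPE('a) n \<and> (\<exists>k. n = 2 ^ k)"
    using exponent by blast
qed

end
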